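(* With $H$, $f$, $V$ (basis $v^{(1)},\dots,v^{(m)}$, coaction $\rho(v^{(i)})=\sum_{j=1}^m v^{(j)}\otimes\sum_{g\in G_f}a_{ji}^gp_g$) and the induced comodule $\tilde V$ as in the context, with $V$ simple, the irreducible character of $\tilde V$ is $$\chi(\tilde V)=\sum_{i=1}^m\sum_{z\in T_f}\sum_{g\in G_f}\tau(z^{-1},g;f)^{-1}\tau(z^{-1}gz,z^{-1};f)\,a_{ii}^g\,p_{z^{-1}gz}\#(z^{-1}\triangleright f).$$
   Context: Standing setup: $\Bbbk$ is an algebraically closed field of characteristic $0$, $F$ a group (possibly infinite), $G$ a finite group, and $(F,G,\triangleleft,\triangleright)$ a matched pair: $\triangleright:G\times F\to F$ a left action of $G$ on the set $F$, $\triangleleft:G\times F\to G$ a right action of $F$ on the set $G$, with $g\triangleright(ff')=(g\triangleright f)((g\triangleleft f)\triangleright f')$ and $(gg')\triangleleft f=(g\triangleleft(g'\triangleright f))(g'\triangleleft f)$. Maps $\sigma:G\times F\times F\to\Bbbk^\times$ and $\tau:G\times G\times F\to\Bbbk^\times$ satisfy: $\sigma(g;1_F,f)=\sigma(g;f,1_F)=\sigma(1_G;f,f')=1$; $\sigma(g\triangleleft f;f',f'')\sigma(g;f,f'f'')=\sigma(g;f,f')\sigma(g;ff',f'')$; $\tau(1_G,g;f)=\tau(g,1_G;f)=\tau(g,g';1_F)=1$; $\tau(g,g';g''\triangleright f)\tau(gg',g'';f)=\tau(g,g'g'';f)\tau(g',g'';f)$; and $\sigma(gg';f,f')\tau(g,g';ff')=\sigma(g;g'\triangleright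 f,(g'\triangleleft f)\triangleright f')\sigma(g';f,f')\tau(g,g';f)\tau(g\triangleleft(g'\triangleright f),g'\triangleleft f;f')$. $H=\Bbbk^G{}^\tau\#_\sigma\Bbbk F$ has basis $\{p_g\#f\}$, product $(p_g\#f)(p_{g'}\#f')=\delta_{g\triangleleft f,g'}\sigma(g;f,f')p_g\#ff'$, coproduct $\Delta(p_g\#f)=\sum_{x\in G}\tau(gx^{-1},x;f)\,p_{gx^{-1}}\#(x\triangleright f)\otimes p_x\#f$, counit $\varepsilon(p_g\#f)=\delta_{g,1_G}$. Fix $f\in F$; $G_f=\{g\in G\mid g\triangleright f=f\}$; $T_f$ a complete set of right coset representatives of $G_f$ in $G$ containing $1_G$. $\Bbbk^{G_f}_{\tau_f}$ is the coalgebra with basis $\{p_g\}_{g\in G_f}$, $\Delta(p_g)=\sum_{x\in G_f}\tau(gx^{-1},x;f)p_{gx^{-1}}\otimes p_x$, $\varepsilon(p_g)=\delta_{g,1_G}$. $H'_f$ is the coalgebra with basis $\{p_g\#f'\mid g\in G_f,f'\in F\}$, $\Delta(p_g\#f')=\sum_{x\in G_f}\tau(gx^{-1},x;f')p_{gx^{-1}}\#(x\triangleright f')\otimes p_x\#f'$; $H$ is a left $H'_f$-comodule via $(\pi_f\otimes\mathrm{id})\Delta$ ($\pi_f$ kills $p_g\#f'$, $g\notin G_f$). For a right $\Bbbk^{G_f}_{\tau_f}$-comodule $V$ with $\rho(v)=\sum_{g\in G_f}v_g\otimes p_g$, $V\otimes\Bbbk f$ is a right $H'_f$-comodule via $v\otimes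 f\mapsto\sum_g v_g\otimes f\otimes p_g\#f$, and the induced comodule $\tilde V=(V\otimes\Bbbk f)\Box_{H'_f}H$ (cotensor product) is a right $H$-comodule via $\mathrm{id}\otimes\Delta$. The character of a finite-dimensional right comodule $(M,\rho)$ with basis $m_1,\dots,m_n$ and dual basis $m_i^*$ is $\chi(M)=\sum_i(m_i^*\otimes\mathrm{id})\rho(m_i)\in H$. *)

theory Defs
  imports "HOL-Algebra.Group" "HOL-Algebra.Coset" "HOL-Library.Function_Algebras"
    "HOL-Computational_Algebra.Polynomial"
begin

definition alg_closed :: "'k::field itself \<Rightarrow> bool" where
  "alg_closed _ \<longleftrightarrow> (\<forall>p :: 'k poly. degree p \<ge> 1 \<longrightarrow> (\<exists>x. poly p x = 0))"

text \<open>A vector space with basis indexed by a set I is modelled as the set of finitely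
  supported functions I -> k (coefficients w.r.t. the basis).  Tensor products of such spaces
  have the product basis.\<close>

definition fsupp :: "('i \<Rightarrow> 'k::zero) \<Rightarrow> 'i set" where
  "fsupp x = {i. x i \<noteq> 0}"

definition vecs :: "'i set \<Rightarrow> ('i \<Rightarrow> 'k::zero) set" where
  "vecs I = {x. finite (fsupp x) \<and> fsupp x \<subseteq> I}"

definition fscale :: "'k::times \<Rightarrow> ('i \<Rightarrow> 'k) \<Rightarrow> ('i \<Rightarrow> 'k)" where
  "fscale c x = (\<lambda>i. c * x i)"

text \<open>Linear extension of a map given on basis vectors: T i is the image of the i-th basis vector.\<close>
definition lin :: "('i \<Rightarrow> 'j \<Rightarrow> 'k::comm_semiring_1) \<Rightarrow> ('i \<Rightarrow> 'k) \<Rightarrow> ('j \<Rightarrow> 'k)" where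
  "lin T x = (\<lambda>j. \<Sum>i\<in>fsupp x. x i * T i j)"

text \<open>T \<otimes> id and id \<otimes> T on basis vectors.\<close>
definition tens_id_r :: "('i \<Rightarrow> 'j \<Rightarrow> 'k::zero) \<Rightarrow> ('i \<times> 'c \<Rightarrow> 'j \<times> 'c \<Rightarrow> 'k)" where
  "tens_id_r T = (\<lambda>(i, c) (j, c'). if c' = c then T i j else 0)"

definition tens_id_l :: "('c \<Rightarrow> 'd \<Rightarrow> 'k::zero) \<Rightarrow> ('i \<times> 'c \<Rightarrow> 'i \<times> 'd \<Rightarrow> 'k)" where
  "tens_id_l T = (\<lambda>(i, c) (j, d). if j = i then T c d else 0)"

definition reassoc :: "(('a \<times> 'b) \<times> 'c \<Rightarrow> 'k) \<Rightarrow> ('a \<times> ('b \<times> 'c) \<Rightarrow> 'k)" where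
  "reassoc x = (\<lambda>(a, b, c). x ((a, b), c))"

text \<open>A coalgebra C with basis indexed by Cb: comultiplication \<Delta> (\<Delta> c is an element of
  C \<otimes> C) and counit \<epsilon>.  A right C-comodule V with basis indexed by I and coaction \<rho>
  (\<rho> i is an element of V \<otimes> C).\<close>
definition right_comodule ::
  "'c set \<Rightarrow> ('c \<Rightarrow> 'c \<times> 'c \<Rightarrow> 'k::comm_semiring_1) \<Rightarrow> ('c \<Rightarrow> 'k)
    \<Rightarrow> 'i set \<Rightarrow> ('i \<Rightarrow> 'i \<times> 'c \<Rightarrow> 'k) \<Rightarrow> bool" where
  "right_comodule Cb \<Delta> \<epsilon> I \<rho> \<longleftrightarrow>
     (\<forall>i\<in>I. \<rho> i \<in> vecs (I \<times> Cb)) \<and>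
     (\<forall>i\<in>I. reassoc (lin (tens_id_r \<rho>) (\<rho> i)) = lin (tens_id_l \<Delta>) (\<rho> i)) \<and>
     (\<forall>i\<in>I. lin (\<lambda>(j, c) j'. if j' = j then \<epsilon> c else 0) (\<rho> i) = (\<lambda>j. if j = i then 1 else 0))"

text \<open>Subcomodule: a subspace W of V with \<rho>(W) \<subseteq> W \<otimes> C, i.e. every C-component of
  \<rho>(w) lies in W.\<close>
definition subcomodule ::
  "'c set \<Rightarrow> 'i set \<Rightarrow> ('i \<Rightarrow> 'i \<times> 'c \<Rightarrow> 'k::field) \<Rightarrow> ('i \<Rightarrow> 'k) set \<Rightarrow> bool" where
  "subcomodule Cb I \<rho> W \<longleftrightarrow>
     W \<subseteq> vecs I \<and> module.subspace fscale W \<and>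
     (\<forall>w\<in>W. \<forall>c\<in>Cb. (\<lambda>j. lin \<rho> w (j, c)) \<in> W)"

definition simple_comodule ::
  "'c set \<Rightarrow> 'i set \<Rightarrow> ('i \<Rightarrow> 'i \<times> 'c \<Rightarrow> 'k::field) \<Rightarrow> bool" where
  "simple_comodule Cb I \<rho> \<longleftrightarrow>
     I \<noteq> {} \<and> (\<forall>W. subcomodule Cb I \<rho> W \<longrightarrow> W = {0} \<or> W = vecs I)"

text \<open>Finite-dimensional comodule given as a subspace M of a coordinate space, with coaction
  described by its components: \<phi> c m is the C-component at basis element c of \<rho>(m), i.e.
  \<rho>(m) = \<Sum>_c \<phi> c m \<otimes> c.  A basis of M, and the character w.r.t. a basis B
  (\<chi> = \<Sum>_b (b^* \<otimes> id) \<rho>(b), coefficient at c).\<close>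
definition is_basis :: "('i \<Rightarrow> 'k::field) set \<Rightarrow> ('i \<Rightarrow> 'k) set \<Rightarrow> bool" where
  "is_basis M B \<longleftrightarrow> finite B \<and> \<not> module.dependent fscale B \<and> module.span fscale B = M"

definition char_wrt ::
  "('i \<Rightarrow> 'k::field) set \<Rightarrow> ('c \<Rightarrow> ('i \<Rightarrow> 'k) \<Rightarrow> ('i \<Rightarrow> 'k)) \<Rightarrow> ('c \<Rightarrow> 'k)" where
  "char_wrt B \<phi> = (\<lambda>c. \<Sum>b\<in>B. module.representation fscale B (\<phi> c b) b)"

definition matched_pair ::
  "('f, 'a) monoid_scheme \<Rightarrow> ('g, 'b) monoid_scheme \<Rightarrow> ('g \<Rightarrow> 'f \<Rightarrow> 'f) \<Rightarrow> ('g \<Rightarrow> 'f \<Rightarrow> 'g) \<Rightarrow> bool"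
  where
  "matched_pair F G lact ract \<longleftrightarrow>
     group F \<and> group G \<and>
     (\<forall>g\<in>carrier G. \<forall>x\<in>carrier F. lact g x \<in> carrier F \<and> ract g x \<in> carrier G) \<and>
     (\<forall>x\<in>carrier F. lact \<one>\<^bsub>G\<^esub> x = x) \<and>
     (\<forall>g\<in>carrier G. \<forall>g'\<in>carrier G. \<forall>x\<in>carrier F.
        lact (g \<otimes>\<^bsub>G\<^esub> g') x = lact g (lact g' x)) \<and>
     (\<forall>g\<in>carrier G. ract g \<one>\<^bsub>F\<^esub> = g) \<and>
     (\<forall>g\<in>carrier G. \<forall>x\<in>carrier F. \<forall>x'\<in>carrier F.
        ract g (x \<otimes>\<^bsub>F\<^esub> x') = ract (ract g x) x') \<and>
     (\<forall>g\<in>carrier G. \<forall>x\<in>carrier F. \<forall>x'\<in>carrier F.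
        lact g (x \<otimes>\<^bsub>F\<^esub> x') = lact g x \<otimes>\<^bsub>F\<^esub> lact (ract g x) x') \<and>
     (\<forall>g\<in>carrier G. \<forall>g'\<in>carrier G. \<forall>x\<in>carrier F.
        ract (g \<otimes>\<^bsub>G\<^esub> g') x = ract g (lact g' x) \<otimes>\<^bsub>G\<^esub> ract g' x)"

definition cocycle_pair ::
  "('f, 'a) monoid_scheme \<Rightarrow> ('g, 'b) monoid_scheme \<Rightarrow> ('g \<Rightarrow> 'f \<Rightarrow> 'f) \<Rightarrow> ('g \<Rightarrow> 'f \<Rightarrow> 'g)
    \<Rightarrow> ('g \<Rightarrow> 'f \<Rightarrow> 'f \<Rightarrow> 'k::field) \<Rightarrow> ('g \<Rightarrow> 'g \<Rightarrow> 'f \<Rightarrow> 'k) \<Rightarrow> bool" where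
  "cocycle_pair F G lact ract \<sigma> \<tau> \<longleftrightarrow>
     (\<forall>g\<in>carrier G. \<forall>x\<in>carrier F. \<forall>x'\<in>carrier F. \<sigma> g x x' \<noteq> 0) \<and>
     (\<forall>g\<in>carrier G. \<forall>g'\<in>carrier G. \<forall>x\<in>carrier F. \<tau> g g' x \<noteq> 0) \<and>
     (\<forall>g\<in>carrier G. \<forall>x\<in>carrier F.
        \<sigma> g \<one>\<^bsub>F\<^esub> x = 1 \<and> \<sigma> g x \<one>\<^bsub>F\<^esub> = 1) \<and>
     (\<forall>x\<in>carrier F. \<forall>x'\<in>carrier F. \<sigma> \<one>\<^bsub>G\<^esub> x x' = 1) \<and>
     (\<forall>g\<in>carrier G. \<forall>x\<in>carrier F. \<forall>x'\<in>carrier F. \<forall>x''\<in>carrier F.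
        \<sigma> (ract g x) x' x'' * \<sigma> g x (x' \<otimes>\<^bsub>F\<^esub> x'')
          = \<sigma> g x x' * \<sigma> g (x \<otimes>\<^bsub>F\<^esub> x') x'') \<and>
     (\<forall>g\<in>carrier G. \<forall>x\<in>carrier F.
        \<tau> \<one>\<^bsub>G\<^esub> g x = 1 \<and> \<tau> g \<one>\<^bsub>G\<^esub> x = 1) \<and>
     (\<forall>g\<in>carrier G. \<forall>g'\<in>carrier G. \<tau> g g' \<one>\<^bsub>F\<^esub> = 1) \<and>
     (\<forall>g\<in>carrier G. \<forall>g'\<in>carrier G. \<forall>g''\<in>carrier G. \<forall>x\<in>carrier F.
        \<tau> g g' (lact g'' x) * \<tau> (g \<otimes>\<^bsub>G\<^esub> g') g'' x
          = \<tau> g (g' \<otimes>\<^bsub>G\<^esub> g'') x * \<tau> g' g'' x) \<and>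
     (\<forall>g\<in>carrier G. \<forall>g'\<in>carrier G. \<forall>x\<in>carrier F. \<forall>x'\<in>carrier F.
        \<sigma> (g \<otimes>\<^bsub>G\<^esub> g') x x' * \<tau> g g' (x \<otimes>\<^bsub>F\<^esub> x')
          = \<sigma> g (lact g' x) (lact (ract g' x) x') * \<sigma> g' x x' * \<tau> g g' x
            * \<tau> (ract g (lact g' x)) (ract g' x) x')"

text \<open>Comultiplication of H = k^G{}^\<tau>#_\<sigma> kF on the basis p_g#x (indexed by (g,x)):
  \<Delta>(p_g#x) = \<Sum>_{y\<in>G} \<tau>(g y^{-1}, y; x) p_{g y^{-1}}#(y \<triangleright> x) \<otimes> p_y#x.\<close>
definition H_comult ::
  "('g, 'b) monoid_scheme \<Rightarrow> ('g \<Rightarrow> 'f \<Rightarrow> 'f) \<Rightarrow> ('g \<Rightarrow> 'g \<Rightarrow> 'f \<Rightarrow> 'k::zero)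
    \<Rightarrow> 'g \<times> 'f \<Rightarrow> ('g \<times> 'f) \<times> ('g \<times> 'f) \<Rightarrow> 'k" where
  "H_comult G lact \<tau> = (\<lambda>(g, x) ((h1, x1), (h2, x2)).
     if h2 \<in> carrier G \<and> h1 = g \<otimes>\<^bsub>G\<^esub> inv\<^bsub>G\<^esub> h2 \<and> x1 = lact h2 x \<and> x2 = x
     then \<tau> (g \<otimes>\<^bsub>G\<^esub> inv\<^bsub>G\<^esub> h2) h2 x else 0)"

definition stab :: "('g, 'b) monoid_scheme \<Rightarrow> ('g \<Rightarrow> 'f \<Rightarrow> 'f) \<Rightarrow> 'f \<Rightarrow> 'g set" where
  "stab G lact x = {g \<in> carrier G. lact g x = x}"

definition kGf_comult ::
  "('g, 'b) monoid_scheme \<Rightarrow> ('g \<Rightarrow> 'f \<Rightarrow> 'f) \<Rightarrow> ('g \<Rightarrow> 'g \<Rightarrow> 'f \<Rightarrow> 'k::zero) \<Rightarrow> 'f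
    \<Rightarrow> 'g \<Rightarrow> 'g \<times> 'g \<Rightarrow> 'k" where
  "kGf_comult G lact \<tau> f = (\<lambda>g (h, y).
     if y \<in> stab G lact f \<and> h = g \<otimes>\<^bsub>G\<^esub> inv\<^bsub>G\<^esub> y then \<tau> (g \<otimes>\<^bsub>G\<^esub> inv\<^bsub>G\<^esub> y) y f else 0)"

definition kGf_counit :: "('g, 'b) monoid_scheme \<Rightarrow> 'g \<Rightarrow> 'k::{zero,one}" where
  "kGf_counit G = (\<lambda>g. if g = \<one>\<^bsub>G\<^esub> then 1 else 0)"

definition V_coaction ::
  "('g, 'b) monoid_scheme \<Rightarrow> ('g \<Rightarrow> 'f \<Rightarrow> 'f) \<Rightarrow> 'f \<Rightarrow> nat \<Rightarrow> (nat \<Rightarrow> nat \<Rightarrow> 'g \<Rightarrow> 'k::zero)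
    \<Rightarrow> nat \<Rightarrow> nat \<times> 'g \<Rightarrow> 'k" where
  "V_coaction G lact f m a = (\<lambda>i (j, g).
     if j \<in> {1..m} \<and> g \<in> stab G lact f then a j i g else 0)"

text \<open>Right H'_f-comodule structure of V \<otimes> kf (identified with V via v \<otimes> f \<mapsto> v):
  v^(i) \<otimes> f \<mapsto> \<Sum>_j \<Sum>_{g\<in>G_f} a_{ji}^g v^(j) \<otimes> f \<otimes> p_g#f.\<close>
definition Vf_coaction ::
  "('g, 'b) monoid_scheme \<Rightarrow> ('g \<Rightarrow> 'f \<Rightarrow> 'f) \<Rightarrow> 'f \<Rightarrow> nat \<Rightarrow> (nat \<Rightarrow> nat \<Rightarrow> 'g \<Rightarrow> 'k::zero)
    \<Rightarrow> nat \<Rightarrow> nat \<times> ('g \<times> 'f) \<Rightarrow> 'k" where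
  "Vf_coaction G lact f m a = (\<lambda>i (j, (g, x)).
     if j \<in> {1..m} \<and> g \<in> stab G lact f \<and> x = f then a j i g else 0)"

text \<open>Left H'_f-coaction on H: (\<pi>_f \<otimes> id) \<Delta>.\<close>
definition H_left_coaction ::
  "('g, 'b) monoid_scheme \<Rightarrow> ('g \<Rightarrow> 'f \<Rightarrow> 'f) \<Rightarrow> ('g \<Rightarrow> 'g \<Rightarrow> 'f \<Rightarrow> 'k::zero) \<Rightarrow> 'f
    \<Rightarrow> 'g \<times> 'f \<Rightarrow> ('g \<times> 'f) \<times> ('g \<times> 'f) \<Rightarrow> 'k" where
  "H_left_coaction G lact \<tau> f = (\<lambda>b ((h1, x1), c).
     if h1 \<in> stab G lact f then H_comult G lact \<tau> b ((h1, x1), c) else 0)"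

text \<open>The induced comodule \<tilde>V = (V \<otimes> kf) \<box>_{H'_f} H, as a subspace of V \<otimes> H
  (basis v^(i) \<otimes> p_g#x indexed by (i,(g,x))).\<close>
definition induced ::
  "('f, 'a) monoid_scheme \<Rightarrow> ('g, 'b) monoid_scheme \<Rightarrow> ('g \<Rightarrow> 'f \<Rightarrow> 'f)
    \<Rightarrow> ('g \<Rightarrow> 'g \<Rightarrow> 'f \<Rightarrow> 'k::comm_semiring_1) \<Rightarrow> 'f \<Rightarrow> nat \<Rightarrow> (nat \<Rightarrow> nat \<Rightarrow> 'g \<Rightarrow> 'k)
    \<Rightarrow> (nat \<times> ('g \<times> 'f) \<Rightarrow> 'k) set" where
  "induced F G lact \<tau> f m a =
     {x \<in> vecs ({1..m} \<times> (carrier G \<times> carrier F)).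
        reassoc (lin (tens_id_r (Vf_coaction G lact f m a)) x)
          = lin (tens_id_l (H_left_coaction G lact \<tau> f)) x}"

text \<open>The coaction id \<otimes> \<Delta> of \<tilde>V, by components: the H-component at basis element c.\<close>
definition induced_coaction_comp ::
  "('g, 'b) monoid_scheme \<Rightarrow> ('g \<Rightarrow> 'f \<Rightarrow> 'f) \<Rightarrow> ('g \<Rightarrow> 'g \<Rightarrow> 'f \<Rightarrow> 'k::comm_semiring_1)
    \<Rightarrow> 'g \<times> 'f \<Rightarrow> (nat \<times> ('g \<times> 'f) \<Rightarrow> 'k) \<Rightarrow> (nat \<times> ('g \<times> 'f) \<Rightarrow> 'k)" where
  "induced_coaction_comp G lact \<tau> c x =
     (\<lambda>(i, b). lin (tens_id_l (H_comult G lact \<tau>)) x (i, (b, c)))"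

end

theory Submission
  imports Defs
begin

(* An element x of V \<otimes> H lies in the cotensor product iff it is supported on the basis
  vectors p_h#y with h \<triangleright> y = f and is G_f-equivariant:
  \<Sum>_i x(i, h, y) a_ji^g = \<tau>(g, h; y) x(j, gh, y).  Since h \<triangleright> y = f forces h = g z and
  y = z^-1 \<triangleright> f with g \<in> G_f and z \<in> T unique, an element is determined by its coordinates
  at the points (k, z, z^-1 \<triangleright> f), which yields a basis indexed by T \<times> {1..m}.  The coaction
  id \<otimes> \<Delta> preserves the induced comodule, so its trace can be read off at these coordinates,
  and a cocycle identity for \<tau> turns the diagonal entries into the stated formula. *)

lemma sum_apply: "(\<Sum>i\<in>A. f i) x = (\<Sum>i\<in>A. f i x)"
  by (induction A rule: infinite_finite_induct) auto

interpretation fvec: vector_space "fscale :: 'k::field \<Rightarrow> ('i \<Rightarrow> 'k) \<Rightarrow> ('i \<Rightarrow> 'k)"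
  by unfold_locales (auto simp: fscale_def fun_eq_iff algebra_simps)

lemma vecs_zero: "p \<notin> A \<Longrightarrow> x \<in> vecs A \<Longrightarrow> x p = 0"
  by (auto simp: vecs_def fsupp_def)

lemma vecs_add: "(x :: 'i \<Rightarrow> 'k::monoid_add) \<in> vecs A \<Longrightarrow> y \<in> vecs A \<Longrightarrow> x + y \<in> vecs A"
proof -
  assume "x \<in> vecs A" "y \<in> vecs A"
  moreover have "fsupp (x + y) \<subseteq> fsupp x \<union> fsupp y" by (auto simp: fsupp_def)
  ultimately show ?thesis unfolding vecs_def by (auto intro: finite_subset)
qed

lemma vecs_fscale: "(x :: 'i \<Rightarrow> 'k::mult_zero) \<in> vecs A \<Longrightarrow> fscale c x \<in> vecs A"
proof -
  assume "x \<in> vecs A"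
  moreover have "fsupp (fscale c x) \<subseteq> fsupp x" by (auto simp: fsupp_def fscale_def)
  ultimately show ?thesis unfolding vecs_def by (auto intro: finite_subset)
qed

lemma lin_eq_single:
  assumes "finite (fsupp x)" and "\<forall>p\<in>fsupp x. p \<noteq> p0 \<longrightarrow> T p d = 0"
  shows "lin T x d = x p0 * T p0 d"
proof -
  have "lin T x d = (\<Sum>p\<in>fsupp x. if p = p0 then x p0 * T p0 d else 0)"
    unfolding lin_def by (rule sum.cong) (use assms in auto)
  also have "\<dots> = x p0 * T p0 d"
    using assms by (auto simp: fsupp_def)
  finally show ?thesis .
qed

lemma lin_tens_id_l_eq_single:
  assumes x: "x \<in> vecs (I \<times> B)" and "\<forall>b\<in>B. b \<noteq> b0 \<longrightarrow> T b d = 0"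
  shows "lin (tens_id_l T) x (j, d) = x (j, b0) * T b0 d"
proof -
  have "lin (tens_id_l T) x (j, d) = x (j, b0) * tens_id_l T (j, b0) (j, d)"
  proof (rule lin_eq_single)
    show "finite (fsupp x)" using x by (simp add: vecs_def)
    show "\<forall>p\<in>fsupp x. p \<noteq> (j, b0) \<longrightarrow> tens_id_l T p (j, d) = 0"
      using x assms(2) by (fastforce simp: vecs_def tens_id_l_def split: if_splits)
  qed
  then show ?thesis by (simp add: tens_id_l_def)
qed

lemma lin_tens_id_r_apply:
  assumes x: "x \<in> vecs (I \<times> C)" and I: "finite I"
  shows "lin (tens_id_r T) x (j, c) = (\<Sum>i\<in>I. x (i, c) * T i j)"
proof -
  have fs: "finite (fsupp x)" "fsupp x \<subseteq> I \<times> C" using x by (auto simp: vecs_def)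
  have "lin (tens_id_r T) x (j, c) = (\<Sum>p\<in>fsupp x. x p * (if snd p = c then T (fst p) j else 0))"
    unfolding lin_def tens_id_r_def by (auto simp: case_prod_beta intro!: sum.cong)
  also have "\<dots> = (\<Sum>p\<in>fsupp x \<union> I \<times> {c}. x p * (if snd p = c then T (fst p) j else 0))"
    by (rule sum.mono_neutral_left) (use fs I in \<open>auto simp: fsupp_def\<close>)
  also have "\<dots> = (\<Sum>p\<in>I \<times> {c}. x p * (if snd p = c then T (fst p) j else 0))"
    by (rule sum.mono_neutral_right) (use fs I in \<open>auto simp: fsupp_def\<close>)
  also have "\<dots> = (\<Sum>i\<in>I. x (i, c) * T i j)"
  proof -
    have "I \<times> {c} = (\<lambda>i. (i, c)) ` I" by auto
    moreover have "inj_on (\<lambda>i. (i, c)) I" by (auto simp: inj_on_def)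
    ultimately show ?thesis by (simp add: sum.reindex)
  qed
  finally show ?thesis .
qed

lemma char_wrt_eq_rank_one_sum:
  fixes B :: "('i \<Rightarrow> 'k::field) set"
  assumes basis: "is_basis M B" and K: "finite K" and u: "\<forall>k\<in>K. u k \<in> M"
    and \<phi>: "\<forall>b\<in>B. \<phi> c b = (\<Sum>k\<in>K. fscale (cf k * b (pt k)) (u k))"
  shows "char_wrt B \<phi> c = (\<Sum>k\<in>K. cf k * u k (pt k))"
proof -
  have fin: "finite B" and ind: "\<not> fvec.dependent B" and sp: "fvec.span B = M"
    using basis by (auto simp: is_basis_def)
  have u_span: "u k \<in> fvec.span B" if "k \<in> K" for k using u that sp by auto
  have rep: "fvec.representation B (\<phi> c b) = (\<lambda>b'. \<Sum>k\<in>K. (cf k * b (pt k)) * fvec.representation B (u k) b')"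
    if "b \<in> B" for b
  proof -
    have "fvec.representation B (\<phi> c b) = (\<lambda>b'. \<Sum>k\<in>K. fvec.representation B (fscale (cf k * b (pt k)) (u k)) b')"
      unfolding \<phi>[rule_format, OF that]
      by (rule fvec.representation_sum[OF ind]) (use u_span in \<open>auto intro: fvec.span_scale\<close>)
    then show ?thesis by (simp add: fvec.representation_scale[OF ind u_span])
  qed
  have coord: "(\<Sum>b\<in>B. fvec.representation B (u k) b * b (pt k)) = u k (pt k)" if "k \<in> K" for k
    using fun_cong[OF fvec.sum_representation_eq[OF ind u_span[OF that] fin order_refl], of "pt k"]
    by (simp add: sum_apply fscale_def)
  have "char_wrt B \<phi> c = (\<Sum>b\<in>B. \<Sum>k\<in>K. (cf k * b (pt k)) * fvec.representation B (u k) b)"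
    by (simp add: char_wrt_def rep)
  also have "\<dots> = (\<Sum>k\<in>K. cf k * (\<Sum>b\<in>B. fvec.representation B (u k) b * b (pt k)))"
    by (subst sum.swap) (simp add: sum_distrib_left mult_ac)
  also have "\<dots> = (\<Sum>k\<in>K. cf k * u k (pt k))"
    by (simp add: coord)
  finally show ?thesis .
qed

(* Only the left action and the cocycle conditions on \<tau> enter the comodule structure of H. *)
locale twisted_action =
  fixes F :: "('f, 'a) monoid_scheme" and G :: "('g, 'b) monoid_scheme" (structure)
    and lact :: "'g \<Rightarrow> 'f \<Rightarrow> 'f" and \<tau> :: "'g \<Rightarrow> 'g \<Rightarrow> 'f \<Rightarrow> 'k::field"
  assumes group_G: "group G"
    and lact_closed: "\<lbrakk>g \<in> carrier G; x \<in> carrier F\<rbrakk> \<Longrightarrow> lact g x \<in> carrier F"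
    and lact_one: "x \<in> carrier F \<Longrightarrow> lact \<one> x = x"
    and lact_mult: "\<lbrakk>g \<in> carrier G; g' \<in> carrier G; x \<in> carrier F\<rbrakk>
      \<Longrightarrow> lact (g \<otimes> g') x = lact g (lact g' x)"
    and tau_nonzero: "\<lbrakk>g \<in> carrier G; g' \<in> carrier G; x \<in> carrier F\<rbrakk> \<Longrightarrow> \<tau> g g' x \<noteq> 0"
    and tau_one_left: "\<lbrakk>g \<in> carrier G; x \<in> carrier F\<rbrakk> \<Longrightarrow> \<tau> \<one> g x = 1"
    and tau_one_right: "\<lbrakk>g \<in> carrier G; x \<in> carrier F\<rbrakk> \<Longrightarrow> \<tau> g \<one> x = 1"
    and tau_cocycle: "\<lbrakk>g \<in> carrier G; g' \<in> carrier G; g'' \<in> carrier G; x \<in> carrier F\<rbrakk>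
      \<Longrightarrow> \<tau> g g' (lact g'' x) * \<tau> (g \<otimes> g') g'' x = \<tau> g (g' \<otimes> g'') x * \<tau> g' g'' x"

lemma matched_pair_twisted_action:
  assumes "matched_pair F G lact ract" and "cocycle_pair F G lact ract \<sigma> \<tau>"
  shows "twisted_action F G lact \<tau>"
  by (rule twisted_action.intro) (use assms in \<open>simp_all add: matched_pair_def cocycle_pair_def\<close>)

context twisted_action
begin

sublocale G: group G by (rule group_G)

lemma lact_inv_eq:
  assumes "g \<in> carrier G" and "x \<in> carrier F" and "lact g x = y"
  shows "lact (inv g) y = x"
  using assms lact_mult[of "inv g" g x] by (simp add: lact_one)

lemma stab_subgroup: "x \<in> carrier F \<Longrightarrow> subgroup (stab G lact x) G"
proof (rule G.subgroupI)
  fix g g' assume x: "x \<in> carrier F" and g: "g \<in> stab G lact x"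
  then show "inv g \<in> stab G lact x"
    using lact_inv_eq[of g x x] by (simp add: stab_def)
  assume "g' \<in> stab G lact x"
  with x g show "g \<otimes> g' \<in> stab G lact x"
    by (simp add: stab_def lact_mult)
qed (auto simp: stab_def lact_one)

lemma tau_conjugate:
  assumes z: "z \<in> carrier G" and g: "g \<in> carrier G" and h: "h \<in> carrier G"
    and conj: "z \<otimes> h = g \<otimes> z" and x: "x \<in> carrier F" and fixed: "lact g x = x"
  shows "\<tau> z h (lact (inv z) x) * inverse (\<tau> g z (lact (inv z) x))
    = inverse (\<tau> (inv z) g x) * \<tau> h (inv z) x"
proof -
  define y where "y = lact (inv z) x"
  have y: "y \<in> carrier F"
    using z x by (simp add: y_def lact_closed)
  have h_inv: "h \<otimes> inv z = inv z \<otimes> g"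
  proof -
    have "h = inv z \<otimes> (z \<otimes> h)" using z h by (simp add: G.m_assoc[symmetric])
    then show ?thesis using conj z g by (simp add: G.m_assoc)
  qed
  have c1: "\<tau> z h y * \<tau> (g \<otimes> z) (inv z) x = \<tau> z (inv z \<otimes> g) x * \<tau> h (inv z) x"
    using tau_cocycle[OF z h _ x, of "inv z"] z conj h_inv by (simp add: y_def)
  have c2: "\<tau> g z y * \<tau> (g \<otimes> z) (inv z) x = \<tau> z (inv z) x"
    using tau_cocycle[OF g z _ x, of "inv z"] z g x by (simp add: y_def tau_one_right)
  have c3: "\<tau> z (inv z) x = \<tau> z (inv z \<otimes> g) x * \<tau> (inv z) g x"
    using tau_cocycle[OF z _ g x, of "inv z"] z g x fixed by (simp add: tau_one_left)
  have B: "\<tau> (g \<otimes> z) (inv z) x \<noteq> 0" using z g x by (simp add: tau_nonzero)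
  have "\<tau> z h y * \<tau> (inv z) g x * \<tau> (g \<otimes> z) (inv z) x
      = (\<tau> z h y * \<tau> (g \<otimes> z) (inv z) x) * \<tau> (inv z) g x"
    by (simp add: mult_ac)
  also have "\<dots> = \<tau> h (inv z) x * \<tau> z (inv z) x"
    by (simp add: c1 c3 mult_ac)
  also have "\<dots> = \<tau> g z y * \<tau> h (inv z) x * \<tau> (g \<otimes> z) (inv z) x"
    by (simp add: c2[symmetric] mult_ac)
  finally have "\<tau> z h y * \<tau> (inv z) g x = \<tau> g z y * \<tau> h (inv z) x"
    using B by simp
  then show ?thesis
    using tau_nonzero[OF g z y] tau_nonzero[of "inv z" g x] z g x
    by (simp add: y_def field_simps)
qed

lemma lin_H_comult_apply:
  assumes x: "x \<in> vecs (J \<times> (carrier G \<times> carrier F))"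
  shows "lin (tens_id_l (H_comult G lact \<tau>)) x (j, ((h1, x1), (h2, x2)))
    = (if h1 \<in> carrier G \<and> h2 \<in> carrier G \<and> x1 = lact h2 x2
       then x (j, (h1 \<otimes> h2, x2)) * \<tau> h1 h2 x2 else 0)"
proof (cases "h1 \<in> carrier G")
  case True
  have "lin (tens_id_l (H_comult G lact \<tau>)) x (j, ((h1, x1), (h2, x2)))
      = x (j, (h1 \<otimes> h2, x2)) * H_comult G lact \<tau> (h1 \<otimes> h2, x2) ((h1, x1), (h2, x2))"
    by (rule lin_tens_id_l_eq_single[OF x]) (auto simp: H_comult_def G.m_assoc)
  then show ?thesis
    using True by (auto simp: H_comult_def G.m_assoc)
next
  case False
  have "tens_id_l (H_comult G lact \<tau>) p (j, ((h1, x1), (h2, x2))) = 0" if "p \<in> fsupp x" for p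
    using that x False by (auto simp: vecs_def tens_id_l_def H_comult_def split: prod.splits)
  then show ?thesis
    using False by (simp add: lin_def)
qed

lemma induced_coaction_comp_apply:
  assumes "x \<in> vecs (J \<times> (carrier G \<times> carrier F))"
  shows "induced_coaction_comp G lact \<tau> (h2, x2) x (j, (h1, x1))
    = (if h1 \<in> carrier G \<and> h2 \<in> carrier G \<and> x1 = lact h2 x2
       then x (j, (h1 \<otimes> h2, x2)) * \<tau> h1 h2 x2 else 0)"
  using lin_H_comult_apply[OF assms] by (simp add: induced_coaction_comp_def)

lemma induced_coaction_comp_vecs:
  assumes x: "x \<in> vecs (J \<times> (carrier G \<times> carrier F))"
  shows "induced_coaction_comp G lact \<tau> (h2, x2) x \<in> vecs (J \<times> (carrier G \<times> carrier F))"
proof -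
  let ?w = "induced_coaction_comp G lact \<tau> (h2, x2) x"
  let ?shift = "\<lambda>(i, (g, y)). (i, (g \<otimes> inv h2, lact h2 y))"
  have "fsupp ?w \<subseteq> ?shift ` fsupp x \<inter> J \<times> (carrier G \<times> carrier F)"
  proof
    fix p assume p_in: "p \<in> fsupp ?w"
    obtain i h1 x1 where p: "p = (i, (h1, x1))" by (cases p) auto
    have h: "h1 \<in> carrier G" "h2 \<in> carrier G" "x1 = lact h2 x2"
      and supp: "(i, (h1 \<otimes> h2, x2)) \<in> fsupp x"
      using p_in by (auto simp: p fsupp_def induced_coaction_comp_apply[OF x] split: if_splits)
    have "(i, (h1 \<otimes> h2, x2)) \<in> J \<times> (carrier G \<times> carrier F)"
      using supp x by (auto simp: vecs_def)
    then show "p \<in> ?shift ` fsupp x \<inter> J \<times> (carrier G \<times> carrier F)"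
      using h p supp
      by (auto simp: G.m_assoc lact_closed intro!: image_eqI[where x="(i, (h1 \<otimes> h2, x2))"])
  qed
  then show ?thesis
    using x by (auto simp: vecs_def intro: finite_subset)
qed

end

locale induced_comodule = twisted_action F G lact \<tau>
  for F :: "('f, 'a) monoid_scheme" and G :: "('g, 'b) monoid_scheme" (structure)
    and lact :: "'g \<Rightarrow> 'f \<Rightarrow> 'f" and \<tau> :: "'g \<Rightarrow> 'g \<Rightarrow> 'f \<Rightarrow> 'k::field" +
  fixes f :: 'f and T :: "'g set" and m :: nat and a :: "nat \<Rightarrow> nat \<Rightarrow> 'g \<Rightarrow> 'k"
  assumes finite_G: "finite (carrier G)"
    and f_in: "f \<in> carrier F"
    and T_sub: "T \<subseteq> carrier G"
    and T_reps: "\<forall>g\<in>carrier G. \<exists>!z. z \<in> T \<and> g \<in> stab G lact f #> z"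
    and comodule: "right_comodule (stab G lact f) (kGf_comult G lact \<tau> f) (kGf_counit G) {1..m}
      (V_coaction G lact f m a)"
begin

abbreviation "S \<equiv> stab G lact f"
abbreviation "I \<equiv> {1..m}"
abbreviation "Vtilde \<equiv> induced F G lact \<tau> f m a"

sublocale S: subgroup S G
  by (rule stab_subgroup[OF f_in])

lemma stab_fixes: "g \<in> S \<Longrightarrow> lact g f = f"
  unfolding stab_def by blast

lemma lact_stab_mult_eq_f:
  assumes g: "g \<in> S" and h: "h \<in> carrier G" and y: "y \<in> carrier F"
  shows "lact (g \<otimes> h) y = f \<longleftrightarrow> lact h y = f"
proof -
  have g_G: "g \<in> carrier G" using g S.subset by blast
  have "lact g (lact h y) = f \<longleftrightarrow> lact h y = f"
  proof
    assume "lact g (lact h y) = f"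
    then have "lact h y = lact (inv g) f"
      using lact_inv_eq[OF g_G lact_closed[OF h y]] by simp
    then show "lact h y = f"
      using stab_fixes[OF S.m_inv_closed[OF g]] by simp
  qed (simp add: stab_fixes[OF g])
  then show ?thesis
    using lact_mult[OF g_G h y] by simp
qed

lemma finite_T: "finite T"
  using finite_G T_sub by (rule finite_subset[rotated])

lemma T_rep_exists: "h \<in> carrier G \<Longrightarrow> \<exists>z\<in>T. h \<otimes> inv z \<in> S"
  using T_reps T_sub S.rcos_module[OF G.is_group] by blast

lemma T_rep_unique:
  "\<lbrakk>h \<in> carrier G; z \<in> T; z' \<in> T; h \<otimes> inv z \<in> S; h \<otimes> inv z' \<in> S\<rbrakk> \<Longrightarrow> z = z'"
  using T_reps T_sub S.rcos_module[OF G.is_group] by blast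

lemma V_coaction_vecs: "k \<in> I \<Longrightarrow> V_coaction G lact f m a k \<in> vecs (I \<times> S)"
  using comodule by (simp add: right_comodule_def)

lemma coeff_one:
  assumes j: "j \<in> I" and k: "k \<in> I"
  shows "a j k \<one> = (if j = k then 1 else 0)"
proof -
  let ?\<epsilon> = "\<lambda>(j, c) j'. if j' = j then kGf_counit G c else 0"
  have "lin ?\<epsilon> (V_coaction G lact f m a k) j = (if j = k then 1 else 0)"
    using comodule k by (simp add: right_comodule_def)
  moreover have "lin ?\<epsilon> (V_coaction G lact f m a k) j
      = V_coaction G lact f m a k (j, \<one>) * ?\<epsilon> (j, \<one>) j"
    by (rule lin_eq_single)
      (use V_coaction_vecs[OF k] in \<open>auto simp: vecs_def kGf_counit_def split: if_splits\<close>)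
  ultimately show ?thesis
    using j by (simp add: V_coaction_def kGf_counit_def)
qed

lemma coeff_mult:
  assumes j: "j \<in> I" and k: "k \<in> I" and g: "g \<in> S" and g': "g' \<in> S"
  shows "(\<Sum>i\<in>I. a j i g * a i k g') = \<tau> g g' f * a j k (g \<otimes> g')"
proof -
  let ?\<rho> = "V_coaction G lact f m a"
  have "(\<Sum>i\<in>I. a j i g * a i k g') = lin (tens_id_r ?\<rho>) (?\<rho> k) ((j, g), g')"
    using lin_tens_id_r_apply[OF V_coaction_vecs[OF k] finite_atLeastAtMost, of ?\<rho> "(j, g)" g'] j g g'
    by (auto simp: V_coaction_def mult.commute intro!: sum.cong)
  also have "\<dots> = lin (tens_id_l (kGf_comult G lact \<tau> f)) (?\<rho> k) (j, (g, g'))"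
  proof -
    have "reassoc (lin (tens_id_r ?\<rho>) (?\<rho> k)) = lin (tens_id_l (kGf_comult G lact \<tau> f)) (?\<rho> k)"
      using comodule k by (simp add: right_comodule_def)
    then show ?thesis by (metis reassoc_def case_prod_conv)
  qed
  also have "\<dots> = ?\<rho> k (j, g \<otimes> g') * kGf_comult G lact \<tau> f (g \<otimes> g') (g, g')"
    by (rule lin_tens_id_l_eq_single[OF V_coaction_vecs[OF k]])
      (use g g' in \<open>auto simp: kGf_comult_def G.m_assoc\<close>)
  also have "\<dots> = \<tau> g g' f * a j k (g \<otimes> g')"
    using j g g' by (simp add: V_coaction_def kGf_comult_def G.m_assoc)
  finally show ?thesis .
qed

lemma lin_Vf_coaction_apply:
  assumes "x \<in> vecs (I \<times> (carrier G \<times> carrier F))"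
  shows "reassoc (lin (tens_id_r (Vf_coaction G lact f m a)) x) (j, ((g, x'), c))
    = (if j \<in> I \<and> g \<in> S \<and> x' = f then (\<Sum>i\<in>I. x (i, c) * a j i g) else 0)"
  using lin_tens_id_r_apply[OF assms finite_atLeastAtMost,
      of "Vf_coaction G lact f m a" "(j, (g, x'))" c]
  by (auto simp: reassoc_def Vf_coaction_def)

lemma lin_H_left_coaction_apply:
  assumes "x \<in> vecs (I \<times> (carrier G \<times> carrier F))"
  shows "lin (tens_id_l (H_left_coaction G lact \<tau> f)) x (j, ((g, x'), (h, y)))
    = (if g \<in> S \<and> h \<in> carrier G \<and> x' = lact h y then x (j, (g \<otimes> h, y)) * \<tau> g h y else 0)"
proof -
  have "lin (tens_id_l (H_left_coaction G lact \<tau> f)) x (j, ((g, x'), (h, y)))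
      = (if g \<in> S then lin (tens_id_l (H_comult G lact \<tau>)) x (j, ((g, x'), (h, y))) else 0)"
  proof -
    have "tens_id_l (H_left_coaction G lact \<tau> f) p (j, ((g, x'), (h, y)))
        = (if g \<in> S then tens_id_l (H_comult G lact \<tau>) p (j, ((g, x'), (h, y))) else 0)" for p
      by (cases p) (simp add: tens_id_l_def H_left_coaction_def)
    then show ?thesis by (simp add: lin_def)
  qed
  then show ?thesis
    using lin_H_comult_apply[OF assms] S.subset by auto
qed

lemma mem_induced_iff_cotensor:
  "x \<in> Vtilde \<longleftrightarrow> x \<in> vecs (I \<times> (carrier G \<times> carrier F)) \<and>
    (\<forall>j g x' h y. (if j \<in> I \<and> g \<in> S \<and> x' = f then (\<Sum>i\<in>I. x (i, (h, y)) * a j i g) else 0)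
       = (if g \<in> S \<and> h \<in> carrier G \<and> x' = lact h y then x (j, (g \<otimes> h, y)) * \<tau> g h y else 0))"
proof (cases "x \<in> vecs (I \<times> (carrier G \<times> carrier F))")
  case True
  then show ?thesis
    unfolding induced_def fun_eq_iff split_paired_All
    by (simp add: lin_Vf_coaction_apply lin_H_left_coaction_apply)
qed (simp add: induced_def)

lemma induced_vecs: "x \<in> Vtilde \<Longrightarrow> x \<in> vecs (I \<times> (carrier G \<times> carrier F))"
  by (simp add: induced_def)

lemma induced_support:
  assumes x: "x \<in> Vtilde" and nz: "x (j, (h, y)) \<noteq> 0"
  shows "lact h y = f"
proof -
  have "(j, (h, y)) \<in> I \<times> (carrier G \<times> carrier F)"
    using nz vecs_zero[OF _ induced_vecs[OF x]] by blast
  moreover have "(if j \<in> I \<and> \<one> \<in> S \<and> lact h y = f then (\<Sum>i\<in>I. x (i, (h, y)) * a j i \<one>) else 0)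
      = (if \<one> \<in> S \<and> h \<in> carrier G \<and> lact h y = lact h y then x (j, (\<one> \<otimes> h, y)) * \<tau> \<one> h y else 0)"
    using x unfolding mem_induced_iff_cotensor by (elim conjE allE) assumption
  ultimately show ?thesis
    using nz S.one_closed by (auto simp: tau_one_left split: if_splits)
qed

lemma induced_equivariant:
  assumes x: "x \<in> Vtilde" and "j \<in> I" and "g \<in> S" and "h \<in> carrier G" and "lact h y = f"
  shows "(\<Sum>i\<in>I. x (i, (h, y)) * a j i g) = x (j, (g \<otimes> h, y)) * \<tau> g h y"
proof -
  have "(if j \<in> I \<and> g \<in> S \<and> f = f then (\<Sum>i\<in>I. x (i, (h, y)) * a j i g) else 0)
      = (if g \<in> S \<and> h \<in> carrier G \<and> f = lact h y then x (j, (g \<otimes> h, y)) * \<tau> g h y else 0)"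
    using x unfolding mem_induced_iff_cotensor by (elim conjE allE) assumption
  with assms show ?thesis by simp
qed

lemma inducedI:
  assumes vecs: "x \<in> vecs (I \<times> (carrier G \<times> carrier F))"
    and support: "\<And>j h y. x (j, (h, y)) \<noteq> 0 \<Longrightarrow> lact h y = f"
    and equivariant: "\<And>j g h y. \<lbrakk>j \<in> I; g \<in> S; h \<in> carrier G; lact h y = f\<rbrakk>
      \<Longrightarrow> (\<Sum>i\<in>I. x (i, (h, y)) * a j i g) = x (j, (g \<otimes> h, y)) * \<tau> g h y"
  shows "x \<in> Vtilde"
  unfolding mem_induced_iff_cotensor
proof (intro conjI allI vecs)
  fix j g x' h y
  show "(if j \<in> I \<and> g \<in> S \<and> x' = f then (\<Sum>i\<in>I. x (i, (h, y)) * a j i g) else 0)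
      = (if g \<in> S \<and> h \<in> carrier G \<and> x' = lact h y then x (j, (g \<otimes> h, y)) * \<tau> g h y else 0)"
  proof (cases "j \<in> I \<and> g \<in> S \<and> h \<in> carrier G \<and> lact h y = f \<and> x' = f")
    case True
    then show ?thesis using equivariant[of j g h y] by simp
  next
    case False
    have lhs: "x (i, (h, y)) = 0" if "\<not> (h \<in> carrier G \<and> lact h y = f)" for i
      using that support vecs_zero[OF _ vecs] by blast
    have rhs: "x (j, (g \<otimes> h, y)) = 0"
      if g: "g \<in> S" and h: "h \<in> carrier G" and not_f: "\<not> (j \<in> I \<and> lact h y = f)"
    proof (rule ccontr)
      assume nz: "x (j, (g \<otimes> h, y)) \<noteq> 0"
      then have "j \<in> I" and "y \<in> carrier F"
        using vecs_zero[OF _ vecs] by blast+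
      then show False
        using support[OF nz] lact_stab_mult_eq_f[OF g h] not_f by blast
    qed
    have "(if j \<in> I \<and> g \<in> S \<and> x' = f then \<Sum>i\<in>I. x (i, (h, y)) * a j i g else 0) = 0"
      using False lhs by (auto intro!: sum.neutral)
    moreover have "(if g \<in> S \<and> h \<in> carrier G \<and> x' = lact h y
        then x (j, (g \<otimes> h, y)) * \<tau> g h y else 0) = 0"
      using False rhs by auto
    ultimately show ?thesis by simp
  qed
qed

lemma induced_subspace: "fvec.subspace Vtilde"
proof (rule fvec.subspaceI)
  show "0 \<in> Vtilde"
    by (rule inducedI) (simp_all add: vecs_def fsupp_def)
next
  fix x y assume x: "x \<in> Vtilde" and y: "y \<in> Vtilde"
  show "x + y \<in> Vtilde"
  proof (rule inducedI)
    show "x + y \<in> vecs (I \<times> (carrier G \<times> carrier F))"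
      using x y by (intro vecs_add induced_vecs)
    show "lact h z = f" if "(x + y) (j, (h, z)) \<noteq> 0" for j h z
      using that induced_support[OF x, of j h z] induced_support[OF y, of j h z] by force
    show "(\<Sum>i\<in>I. (x + y) (i, (h, z)) * a j i g) = (x + y) (j, (g \<otimes> h, z)) * \<tau> g h z"
      if "j \<in> I" "g \<in> S" "h \<in> carrier G" "lact h z = f" for j g h z
      using induced_equivariant[OF x that] induced_equivariant[OF y that]
      by (simp add: sum.distrib distrib_right)
  qed
next
  fix c x assume x: "x \<in> Vtilde"
  show "fscale c x \<in> Vtilde"
  proof (rule inducedI)
    show "fscale c x \<in> vecs (I \<times> (carrier G \<times> carrier F))"
      using x by (intro vecs_fscale induced_vecs)
    show "lact h z = f" if "fscale c x (j, (h, z)) \<noteq> 0" for j h z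
      using that induced_support[OF x, of j h z] by (simp add: fscale_def)
    show "(\<Sum>i\<in>I. fscale c x (i, (h, z)) * a j i g) = fscale c x (j, (g \<otimes> h, z)) * \<tau> g h z"
      if "j \<in> I" "g \<in> S" "h \<in> carrier G" "lact h z = f" for j g h z
      using induced_equivariant[OF x that]
      by (simp add: fscale_def mult.assoc sum_distrib_left[symmetric])
  qed
qed

lemma induced_coaction_comp_closed:
  assumes x: "x \<in> Vtilde"
  shows "induced_coaction_comp G lact \<tau> (h2, x2) x \<in> Vtilde"
proof (rule inducedI)
  have xv: "x \<in> vecs (I \<times> (carrier G \<times> carrier F))"
    using x by (rule induced_vecs)
  note w = induced_coaction_comp_apply[OF xv, of h2 x2]
  show "induced_coaction_comp G lact \<tau> (h2, x2) x \<in> vecs (I \<times> (carrier G \<times> carrier F))"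
    by (rule induced_coaction_comp_vecs[OF xv])
  show "lact h y = f" if "induced_coaction_comp G lact \<tau> (h2, x2) x (j, (h, y)) \<noteq> 0" for j h y
  proof -
    have h: "h \<in> carrier G" "h2 \<in> carrier G" "y = lact h2 x2" and nz: "x (j, (h \<otimes> h2, x2)) \<noteq> 0"
      using that by (auto simp: w split: if_splits)
    have "x2 \<in> carrier F"
      using nz vecs_zero[OF _ xv] by blast
    then show ?thesis
      using h induced_support[OF x nz] by (simp add: lact_mult)
  qed
  show "(\<Sum>i\<in>I. induced_coaction_comp G lact \<tau> (h2, x2) x (i, (h, y)) * a j i g)
      = induced_coaction_comp G lact \<tau> (h2, x2) x (j, (g \<otimes> h, y)) * \<tau> g h y"
    if j: "j \<in> I" and g: "g \<in> S" and h: "h \<in> carrier G" and hy: "lact h y = f" for j g h y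
  proof (cases "h2 \<in> carrier G \<and> y = lact h2 x2 \<and> x2 \<in> carrier F")
    case True
    then have h2: "h2 \<in> carrier G" and y: "y = lact h2 x2" and x2: "x2 \<in> carrier F" by auto
    have g_G: "g \<in> carrier G" using g S.subset by blast
    let ?x = "x (j, (g \<otimes> (h \<otimes> h2), x2))"
    have "(\<Sum>i\<in>I. induced_coaction_comp G lact \<tau> (h2, x2) x (i, (h, y)) * a j i g)
        = \<tau> h h2 x2 * (\<Sum>i\<in>I. x (i, (h \<otimes> h2, x2)) * a j i g)"
      using h h2 y by (simp add: w sum_distrib_left mult_ac)
    also have "\<dots> = ?x * (\<tau> g (h \<otimes> h2) x2 * \<tau> h h2 x2)"
      using induced_equivariant[OF x j g, of "h \<otimes> h2" x2] h h2 x2 hy y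
      by (simp add: lact_mult mult_ac)
    also have "\<dots> = ?x * (\<tau> g h (lact h2 x2) * \<tau> (g \<otimes> h) h2 x2)"
      using tau_cocycle[OF g_G h h2 x2] by simp
    also have "\<dots> = induced_coaction_comp G lact \<tau> (h2, x2) x (j, (g \<otimes> h, y)) * \<tau> g h y"
      using g_G h h2 y by (simp add: w G.m_assoc mult_ac)
    finally show ?thesis .
  next
    case False
    then have "induced_coaction_comp G lact \<tau> (h2, x2) x (i, (h', y)) = 0" for i h'
      using vecs_zero[OF _ xv] by (auto simp: w)
    then show ?thesis by simp
  qed
qed

definition shifted_f :: "'g \<Rightarrow> 'f" where
  "shifted_f z = lact (inv z) f"

lemma shifted_f_in: "z \<in> carrier G \<Longrightarrow> shifted_f z \<in> carrier F"
  by (simp add: shifted_f_def lact_closed f_in)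

lemma lact_shifted_f:
  assumes z: "z \<in> carrier G" and g: "g \<in> S"
  shows "lact (g \<otimes> z) (shifted_f z) = f"
proof -
  have g_G: "g \<in> carrier G" using g S.subset by blast
  have "lact (g \<otimes> z) (shifted_f z) = lact (g \<otimes> z \<otimes> inv z) f"
    using z g_G f_in by (simp add: shifted_f_def lact_mult)
  also have "\<dots> = f"
    using z g_G stab_fixes[OF g] by (simp add: G.m_assoc)
  finally show ?thesis .
qed

lemma shifted_f_unique:
  assumes z: "z \<in> carrier G" and g: "g \<in> S" and y: "y \<in> carrier F"
    and fixes_f: "lact (g \<otimes> z) y = f"
  shows "y = shifted_f z"
proof -
  have "lact z y = f"
    using lact_stab_mult_eq_f[OF g z y] fixes_f by simp
  then show ?thesis
    using lact_inv_eq[OF z y] by (simp add: shifted_f_def)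
qed

(* ind_basis z k is the element of the induced comodule whose coordinates at the points
  (j, (z, shifted_f z)) form the k-th unit vector; equivariance determines it on the rest of
  the coset G_f z, and all its other coordinates vanish. *)
definition ind_basis :: "'g \<Rightarrow> nat \<Rightarrow> nat \<times> ('g \<times> 'f) \<Rightarrow> 'k" where
  "ind_basis z k = (\<lambda>(j, (h, y)).
     if j \<in> I \<and> h \<in> carrier G \<and> h \<otimes> inv z \<in> S \<and> y = shifted_f z
     then inverse (\<tau> (h \<otimes> inv z) z y) * a j k (h \<otimes> inv z) else 0)"

lemma ind_basis_coset_apply:
  assumes "z \<in> carrier G" and "g \<in> S" and "j \<in> I"
  shows "ind_basis z k (j, (g \<otimes> z, y))
    = (if y = shifted_f z then inverse (\<tau> g z y) * a j k g else 0)"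
  using assms S.subset by (auto simp: ind_basis_def G.m_assoc)

lemma ind_basis_coset_equivariant:
  assumes z: "z \<in> carrier G" and j: "j \<in> I" and k: "k \<in> I" and g: "g \<in> S" and g': "g' \<in> S"
    and y: "y = shifted_f z"
  shows "(\<Sum>i\<in>I. ind_basis z k (i, (g' \<otimes> z, y)) * a j i g)
    = ind_basis z k (j, (g \<otimes> (g' \<otimes> z), y)) * \<tau> g (g' \<otimes> z) y"
proof -
  have g_G: "g \<in> carrier G" and g'_G: "g' \<in> carrier G" using g g' S.subset by blast+
  have y_F: "y \<in> carrier F" using shifted_f_in[OF z] by (simp add: y)
  have zy: "lact z y = f" using lact_shifted_f[OF z S.one_closed] z y by simp
  have "(\<Sum>i\<in>I. ind_basis z k (i, (g' \<otimes> z, y)) * a j i g)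
      = inverse (\<tau> g' z y) * (\<Sum>i\<in>I. a j i g * a i k g')"
    using ind_basis_coset_apply[OF z g'] y by (simp add: sum_distrib_left mult_ac)
  also have "\<dots> = \<tau> g g' (lact z y) * inverse (\<tau> g' z y) * a j k (g \<otimes> g')"
    using coeff_mult[OF j k g g'] zy by simp
  also have "\<dots> = \<tau> g (g' \<otimes> z) y * inverse (\<tau> (g \<otimes> g') z y) * a j k (g \<otimes> g')"
    using tau_cocycle[OF g_G g'_G z y_F] tau_nonzero[OF g'_G z y_F]
      tau_nonzero[OF G.m_closed[OF g_G g'_G] z y_F]
    by (simp add: field_simps)
  also have "\<dots> = ind_basis z k (j, (g \<otimes> (g' \<otimes> z), y)) * \<tau> g (g' \<otimes> z) y"
    using ind_basis_coset_apply[OF z S.m_closed[OF g g'] j] y g_G g'_G z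
    by (simp add: G.m_assoc mult_ac)
  finally show ?thesis .
qed

lemma ind_basis_mem:
  assumes z: "z \<in> carrier G" and k: "k \<in> I"
  shows "ind_basis z k \<in> Vtilde"
proof (rule inducedI)
  have "fsupp (ind_basis z k) \<subseteq> I \<times> (carrier G \<times> {shifted_f z})"
    by (auto simp: fsupp_def ind_basis_def split: if_splits)
  then show "ind_basis z k \<in> vecs (I \<times> (carrier G \<times> carrier F))"
    using finite_G shifted_f_in[OF z] unfolding vecs_def by (auto intro: finite_subset)
next
  fix j h y assume "ind_basis z k (j, (h, y)) \<noteq> 0"
  then have h: "h \<in> carrier G" and g: "h \<otimes> inv z \<in> S" and y: "y = shifted_f z"
    by (auto simp: ind_basis_def split: if_splits)
  then show "lact h y = f"
    using lact_shifted_f[OF z g] h z y by (simp add: G.m_assoc)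
next
  fix j g h y assume j: "j \<in> I" and g: "g \<in> S" and h: "h \<in> carrier G"
  show "(\<Sum>i\<in>I. ind_basis z k (i, (h, y)) * a j i g) = ind_basis z k (j, (g \<otimes> h, y)) * \<tau> g h y"
  proof (cases "h \<otimes> inv z \<in> S \<and> y = shifted_f z")
    case True
    define g' where "g' = h \<otimes> inv z"
    have g': "g' \<in> S" and y: "y = shifted_f z" using True by (auto simp: g'_def)
    have h_eq: "h = g' \<otimes> z" using h z by (simp add: g'_def G.m_assoc)
    show ?thesis
      unfolding h_eq by (rule ind_basis_coset_equivariant[OF z j k g g' y])
  next
    case False
    have g_G: "g \<in> carrier G" using g S.subset by blast
    have "g \<otimes> h \<otimes> inv z \<notin> S" if "h \<otimes> inv z \<notin> S"
    proof
      assume "g \<otimes> h \<otimes> inv z \<in> S"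
      then have "inv g \<otimes> (g \<otimes> h \<otimes> inv z) \<in> S" using g by blast
      then show False using that g_G h z by (simp add: G.m_assoc[symmetric])
    qed
    then show ?thesis
      using False by (auto simp: ind_basis_def)
  qed
qed

lemma induced_coset_expansion:
  assumes x: "x \<in> Vtilde" and j: "j \<in> I" and z: "z \<in> carrier G" and g: "g \<in> S"
  shows "x (j, (g \<otimes> z, y)) = (\<Sum>k\<in>I. x (k, (z, shifted_f z)) * ind_basis z k (j, (g \<otimes> z, y)))"
proof (cases "y = shifted_f z")
  case True
  have g_G: "g \<in> carrier G" using g S.subset by blast
  have y_F: "y \<in> carrier F" using shifted_f_in[OF z] by (simp add: True)
  have "(\<Sum>k\<in>I. x (k, (z, shifted_f z)) * ind_basis z k (j, (g \<otimes> z, y)))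
      = inverse (\<tau> g z y) * (\<Sum>k\<in>I. x (k, (z, y)) * a j k g)"
    using ind_basis_coset_apply[OF z g j] True by (simp add: sum_distrib_left mult_ac)
  also have "\<dots> = inverse (\<tau> g z y) * (x (j, (g \<otimes> z, y)) * \<tau> g z y)"
    using induced_equivariant[OF x j g z] lact_shifted_f[OF z S.one_closed] z True by simp
  also have "\<dots> = x (j, (g \<otimes> z, y))"
    using tau_nonzero[OF g_G z y_F] by simp
  finally show ?thesis ..
next
  case False
  have "x (j, (g \<otimes> z, y)) = 0"
  proof (rule ccontr)
    assume nz: "x (j, (g \<otimes> z, y)) \<noteq> 0"
    then have "y \<in> carrier F"
      using vecs_zero[OF _ induced_vecs[OF x]] by blast
    with False show False
      using shifted_f_unique[OF z g] induced_support[OF x nz] by blast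
  qed
  then show ?thesis
    using ind_basis_coset_apply[OF z g j] False by simp
qed

lemma induced_expansion:
  assumes x: "x \<in> Vtilde"
  shows "x = (\<Sum>(z, k)\<in>T \<times> I. fscale (x (k, (z, shifted_f z))) (ind_basis z k))"
proof
  fix p :: "nat \<times> ('g \<times> 'f)"
  obtain j h y where p: "p = (j, (h, y))" by (cases p) auto
  have "(\<Sum>(z, k)\<in>T \<times> I. fscale (x (k, (z, shifted_f z))) (ind_basis z k)) p
      = (\<Sum>z\<in>T. \<Sum>k\<in>I. x (k, (z, shifted_f z)) * ind_basis z k p)"
    by (simp add: sum_apply fscale_def sum.cartesian_product case_prod_unfold)
  also have "\<dots> = x p"
  proof (cases "j \<in> I \<and> h \<in> carrier G")
    case False
    then show ?thesis
      using vecs_zero[OF _ induced_vecs[OF x]] by (auto simp: p ind_basis_def)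
  next
    case True
    then obtain z0 where z0: "z0 \<in> T" and g: "h \<otimes> inv z0 \<in> S"
      using T_rep_exists by blast
    have z0_G: "z0 \<in> carrier G" using z0 T_sub by blast
    have "ind_basis z k p = 0" if "z \<in> T" "z \<noteq> z0" for z k
      using T_rep_unique[of h z z0] that z0 g True by (auto simp: p ind_basis_def)
    then have "(\<Sum>z\<in>T. \<Sum>k\<in>I. x (k, (z, shifted_f z)) * ind_basis z k p)
        = (\<Sum>z\<in>{z0}. \<Sum>k\<in>I. x (k, (z, shifted_f z)) * ind_basis z k p)"
      by (intro sum.mono_neutral_right[OF finite_T]) (use z0 in auto)
    also have "\<dots> = (\<Sum>k\<in>I. x (k, (z0, shifted_f z0)) * ind_basis z0 k p)"
      by simp
    also have "\<dots> = x p"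
      using induced_coset_expansion[OF x _ z0_G g] True z0_G
      by (simp add: p G.m_assoc)
    finally show ?thesis .
  qed
  finally show "x p = (\<Sum>(z, k)\<in>T \<times> I. fscale (x (k, (z, shifted_f z))) (ind_basis z k)) p"
    by simp
qed

lemma ind_basis_at_reps:
  assumes z: "z \<in> T" and z': "z' \<in> T" and j: "j \<in> I" and k: "k \<in> I"
  shows "ind_basis z k (j, (z', shifted_f z')) = (if z = z' \<and> j = k then 1 else 0)"
proof (cases "z = z'")
  case True
  have "z \<in> carrier G" using z T_sub by blast
  then show ?thesis
    using ind_basis_coset_apply[OF _ S.one_closed j, of z k] True shifted_f_in
    by (simp add: coeff_one[OF j k] tau_one_left)
next
  case False
  have "z' \<in> carrier G" using z' T_sub by blast
  then have "z' \<otimes> inv z \<notin> S"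
    using T_rep_unique[of z' z z'] False z z' S.one_closed by auto
  then show ?thesis
    using False by (simp add: ind_basis_def)
qed

lemma inj_on_ind_basis: "inj_on (\<lambda>(z, k). ind_basis z k) (T \<times> I)"
proof (rule inj_onI)
  fix q q' assume q: "q \<in> T \<times> I" and q': "q' \<in> T \<times> I"
    and eq: "(\<lambda>(z, k). ind_basis z k) q = (\<lambda>(z, k). ind_basis z k) q'"
  obtain z k z' k' where qs: "q = (z, k)" "q' = (z', k')" by force
  have "ind_basis z k (k, (z, shifted_f z)) = ind_basis z' k' (k, (z, shifted_f z))"
    using eq qs by simp
  then show "q = q'"
    using q q' qs by (simp add: ind_basis_at_reps split: if_splits)
qed

lemma ind_basis_independent: "\<not> fvec.dependent ((\<lambda>(z, k). ind_basis z k) ` (T \<times> I))"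
proof
  let ?e = "\<lambda>(z, k). ind_basis z k"
  assume "fvec.dependent (?e ` (T \<times> I))"
  moreover have "finite (?e ` (T \<times> I))"
    using finite_T by simp
  ultimately obtain u where u: "\<exists>v\<in>?e ` (T \<times> I). u v \<noteq> 0"
    and sum_img: "(\<Sum>v\<in>?e ` (T \<times> I). fscale (u v) v) = 0"
    using fvec.dependent_finite by blast
  have "(\<Sum>v\<in>?e ` (T \<times> I). fscale (u v) v) = (\<Sum>q\<in>T \<times> I. fscale (u (?e q)) (?e q))"
    by (rule sum.reindex_cong[OF inj_on_ind_basis]) auto
  with sum_img have sum0: "(\<Sum>q\<in>T \<times> I. fscale (u (?e q)) (?e q)) = 0"
    by simp
  have "u (ind_basis z k) = 0" if z: "z \<in> T" and k: "k \<in> I" for z k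
  proof -
    have "0 = (\<Sum>q\<in>T \<times> I. fscale (u (?e q)) (?e q)) (k, (z, shifted_f z))"
      using sum0 by simp
    also have "\<dots> = (\<Sum>q\<in>T \<times> I. if q = (z, k) then u (ind_basis z k) else 0)"
      unfolding sum_apply fscale_def
      by (rule sum.cong) (use z k in \<open>auto simp: ind_basis_at_reps split: if_splits\<close>)
    also have "\<dots> = u (ind_basis z k)"
      using z k finite_T by simp
    finally show ?thesis by simp
  qed
  with u show False by auto
qed

lemma induced_is_basis: "is_basis Vtilde ((\<lambda>(z, k). ind_basis z k) ` (T \<times> I))"
proof -
  let ?E = "(\<lambda>(z, k). ind_basis z k) ` (T \<times> I)"
  have "fvec.span ?E = Vtilde"
  proof (rule fvec.span_subspace)
    show "?E \<subseteq> Vtilde"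
      using ind_basis_mem T_sub by auto
    show "Vtilde \<subseteq> fvec.span ?E"
    proof
      fix x assume x: "x \<in> Vtilde"
      have "(\<Sum>(z, k)\<in>T \<times> I. fscale (x (k, (z, shifted_f z))) (ind_basis z k)) \<in> fvec.span ?E"
        by (intro fvec.span_sum) (auto intro: fvec.span_scale fvec.span_base)
      then show "x \<in> fvec.span ?E"
        using induced_expansion[OF x] by simp
    qed
  qed (rule induced_subspace)
  then show ?thesis
    using finite_T ind_basis_independent by (simp add: is_basis_def)
qed

lemma char_induced_expansion:
  assumes B: "is_basis Vtilde B"
  shows "char_wrt B (induced_coaction_comp G lact \<tau>) (h2, x2)
    = (\<Sum>(z, k)\<in>T \<times> I. (if h2 \<in> carrier G \<and> shifted_f z = lact h2 x2 then \<tau> z h2 x2 else 0)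
        * ind_basis z k (k, (z \<otimes> h2, x2)))"
proof -
  let ?cf = "\<lambda>(z, k :: nat). if h2 \<in> carrier G \<and> shifted_f z = lact h2 x2 then \<tau> z h2 x2 else 0"
  let ?pt = "\<lambda>(z, k :: nat). (k, (z \<otimes> h2, x2))"
  have "char_wrt B (induced_coaction_comp G lact \<tau>) (h2, x2)
      = (\<Sum>q\<in>T \<times> I. ?cf q * case_prod ind_basis q (?pt q))"
  proof (rule char_wrt_eq_rank_one_sum[OF B])
    show "finite (T \<times> I)"
      using finite_T by simp
    show "\<forall>q\<in>T \<times> I. case_prod ind_basis q \<in> Vtilde"
      using ind_basis_mem T_sub by auto
    show "\<forall>b\<in>B. induced_coaction_comp G lact \<tau> (h2, x2) b
        = (\<Sum>q\<in>T \<times> I. fscale (?cf q * b (?pt q)) (case_prod ind_basis q))"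
    proof
      fix b assume "b \<in> B"
      then have b: "b \<in> Vtilde"
        using B fvec.span_base[of b B] by (auto simp: is_basis_def)
      show "induced_coaction_comp G lact \<tau> (h2, x2) b
          = (\<Sum>q\<in>T \<times> I. fscale (?cf q * b (?pt q)) (case_prod ind_basis q))"
        using T_sub
        by (subst induced_expansion[OF induced_coaction_comp_closed[OF b]])
          (auto simp: induced_coaction_comp_apply[OF induced_vecs[OF b]] mult.commute
            intro!: sum.cong)
    qed
  qed
  then show ?thesis
    by (simp add: case_prod_unfold)
qed

lemma sum_stab_conj_eq:
  assumes z: "z \<in> carrier G" and h: "h \<in> carrier G"
  shows "(\<Sum>g\<in>S. if (h, y) = (inv z \<otimes> g \<otimes> z, lact (inv z) f) then Q g else 0)
    = (if z \<otimes> h \<otimes> inv z \<in> S \<and> y = shifted_f z then Q (z \<otimes> h \<otimes> inv z) else 0)"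
proof -
  have "h = inv z \<otimes> g \<otimes> z \<longleftrightarrow> g = z \<otimes> h \<otimes> inv z" if "g \<in> carrier G" for g
    using that z h by (auto simp: G.m_assoc; simp add: G.m_assoc[symmetric])
  then have "(\<Sum>g\<in>S. if (h, y) = (inv z \<otimes> g \<otimes> z, lact (inv z) f) then Q g else 0)
      = (\<Sum>g\<in>S. if g = z \<otimes> h \<otimes> inv z then (if y = shifted_f z then Q g else 0) else 0)"
    by (intro sum.cong) (use S.subset in \<open>auto simp: shifted_f_def\<close>)
  then show ?thesis
    using finite_subset[OF S.subset finite_G] by simp
qed

lemma ind_basis_diagonal:
  assumes z: "z \<in> carrier G" and k: "k \<in> I" and g: "g \<in> carrier G" and h: "h \<in> carrier G"
    and conj: "z \<otimes> h = g \<otimes> z"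
  shows "(if shifted_f z = lact h y then \<tau> z h y else 0) * ind_basis z k (k, (z \<otimes> h, y))
    = (if g \<in> S \<and> y = shifted_f z then inverse (\<tau> (inv z) g f) * \<tau> h (inv z) f * a k k g else 0)"
proof (cases "g \<in> S \<and> y = shifted_f z")
  case False
  have "g = z \<otimes> h \<otimes> inv z"
    using G.inv_solve_right[OF g G.m_closed[OF z h] z] conj by simp
  then have zero: "ind_basis z k (k, (z \<otimes> h, y)) = 0"
    using False z h by (auto simp: ind_basis_def)
  show ?thesis
    by (simp only: zero mult_zero_right if_not_P[OF False])
next
  case True
  then have gS: "g \<in> S" and y: "y = shifted_f z" by auto
  have y_F: "y \<in> carrier F" using shifted_f_in[OF z] y by simp
  have "lact z (lact h y) = lact (g \<otimes> z) y"
    using lact_mult[OF z h y_F] conj by simp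
  also have "\<dots> = f"
    using lact_shifted_f[OF z gS] y by simp
  finally have "lact (inv z) f = lact h y"
    by (rule lact_inv_eq[OF z lact_closed[OF h y_F]])
  then have fixed: "shifted_f z = lact h y"
    by (simp add: shifted_f_def)
  have "\<tau> z h y * ind_basis z k (k, (z \<otimes> h, y))
      = \<tau> z h (lact (inv z) f) * inverse (\<tau> g z (lact (inv z) f)) * a k k g"
    using ind_basis_coset_apply[OF z gS k] conj y by (simp add: shifted_f_def)
  also have "\<dots> = inverse (\<tau> (inv z) g f) * \<tau> h (inv z) f * a k k g"
    using tau_conjugate[OF z g h conj f_in stab_fixes[OF gS]] by simp
  finally have diagonal: "\<tau> z h y * ind_basis z k (k, (z \<otimes> h, y))
      = inverse (\<tau> (inv z) g f) * \<tau> h (inv z) f * a k k g" .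
  show ?thesis
    unfolding if_P[OF True] if_P[OF fixed] by (rule diagonal)
qed

lemma char_induced_summand:
  assumes z: "z \<in> T" and k: "k \<in> I"
  shows "(if h \<in> carrier G \<and> shifted_f z = lact h y then \<tau> z h y else 0)
      * ind_basis z k (k, (z \<otimes> h, y))
    = (\<Sum>g\<in>S. if (h, y) = (inv z \<otimes> g \<otimes> z, lact (inv z) f)
        then inverse (\<tau> (inv z) g f) * \<tau> (inv z \<otimes> g \<otimes> z) (inv z) f * a k k g else 0)"
proof (cases "h \<in> carrier G")
  case False
  have "z \<in> carrier G" using z T_sub by blast
  then have "h \<noteq> inv z \<otimes> g \<otimes> z" if "g \<in> S" for g
    using False that S.subset by blast
  then show ?thesis
    using False by (auto intro!: sum.neutral[symmetric])
next
  case True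
  have z_G: "z \<in> carrier G" using z T_sub by blast
  define g where "g = z \<otimes> h \<otimes> inv z"
  have g_G: "g \<in> carrier G" and conj: "z \<otimes> h = g \<otimes> z"
    using True z_G by (simp_all add: g_def G.m_assoc)
  have h_eq: "h = inv z \<otimes> g \<otimes> z"
    using G.inv_solve_left[OF True z_G G.m_closed[OF g_G z_G]] conj g_G z_G
    by (simp add: G.m_assoc)
  let ?Q = "\<lambda>g. inverse (\<tau> (inv z) g f) * \<tau> (inv z \<otimes> g \<otimes> z) (inv z) f * a k k g"
  have "(if h \<in> carrier G \<and> shifted_f z = lact h y then \<tau> z h y else 0)
      * ind_basis z k (k, (z \<otimes> h, y)) = (if g \<in> S \<and> y = shifted_f z then ?Q g else 0)"
    using ind_basis_diagonal[OF z_G k g_G True conj] True by (simp add: h_eq[symmetric])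
  also have "\<dots> = (\<Sum>g\<in>S. if (h, y) = (inv z \<otimes> g \<otimes> z, lact (inv z) f) then ?Q g else 0)"
    using sum_stab_conj_eq[OF z_G True, of y ?Q] by (simp add: g_def)
  finally show ?thesis .
qed

lemma char_induced:
  assumes B: "is_basis Vtilde B"
  shows "char_wrt B (induced_coaction_comp G lact \<tau>)
    = (\<lambda>c. \<Sum>i\<in>I. \<Sum>z\<in>T. \<Sum>g\<in>S.
         if c = (inv z \<otimes> g \<otimes> z, lact (inv z) f)
         then inverse (\<tau> (inv z) g f) * \<tau> (inv z \<otimes> g \<otimes> z) (inv z) f * a i i g
         else 0)"
proof
  fix c :: "'g \<times> 'f"
  obtain h2 x2 where c: "c = (h2, x2)" by force
  let ?Q = "\<lambda>z k. \<Sum>g\<in>S. if (h2, x2) = (inv z \<otimes> g \<otimes> z, lact (inv z) f)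
    then inverse (\<tau> (inv z) g f) * \<tau> (inv z \<otimes> g \<otimes> z) (inv z) f * a k k g else 0"
  have "char_wrt B (induced_coaction_comp G lact \<tau>) (h2, x2) = (\<Sum>(z, k)\<in>T \<times> I. ?Q z k)"
    unfolding char_induced_expansion[OF B] by (rule sum.cong) (auto simp: char_induced_summand)
  also have "\<dots> = (\<Sum>k\<in>I. \<Sum>z\<in>T. ?Q z k)"
    unfolding sum.cartesian_product[symmetric] by (rule sum.swap)
  finally show "char_wrt B (induced_coaction_comp G lact \<tau>) c = (\<Sum>i\<in>I. \<Sum>z\<in>T. \<Sum>g\<in>S.
      if c = (inv z \<otimes> g \<otimes> z, lact (inv z) f)
      then inverse (\<tau> (inv z) g f) * \<tau> (inv z \<otimes> g \<otimes> z) (inv z) f * a i i g else 0)"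
    by (simp add: c)
qed

end

theorem proposition5p2:
  fixes F :: "('f, 'a) monoid_scheme" and G :: "('g, 'b) monoid_scheme"
    and lact :: "'g \<Rightarrow> 'f \<Rightarrow> 'f" and ract :: "'g \<Rightarrow> 'f \<Rightarrow> 'g"
    and \<sigma> :: "'g \<Rightarrow> 'f \<Rightarrow> 'f \<Rightarrow> 'k::field_char_0" and \<tau> :: "'g \<Rightarrow> 'g \<Rightarrow> 'f \<Rightarrow> 'k"
    and f :: 'f and T :: "'g set" and m :: nat and a :: "nat \<Rightarrow> nat \<Rightarrow> 'g \<Rightarrow> 'k"
  assumes "alg_closed TYPE('k)"
    and "matched_pair F G lact ract"
    and "finite (carrier G)"
    and "cocycle_pair F G lact ract \<sigma> \<tau>"
    and "f \<in> carrier F"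
    and "T \<subseteq> carrier G" and "\<one>\<^bsub>G\<^esub> \<in> T"
    and "\<forall>g\<in>carrier G. \<exists>!z. z \<in> T \<and> g \<in> stab G lact f #>\<^bsub>G\<^esub> z"
    and "right_comodule (stab G lact f) (kGf_comult G lact \<tau> f) (kGf_counit G) {1..m}
           (V_coaction G lact f m a)"
    and "simple_comodule (stab G lact f) {1..m} (V_coaction G lact f m a)"
  shows "(\<exists>B. is_basis (induced F G lact \<tau> f m a) B) \<and>
    (\<forall>B. is_basis (induced F G lact \<tau> f m a) B \<longrightarrow>
      char_wrt B (induced_coaction_comp G lact \<tau>) =
      (\<lambda>c. \<Sum>i\<in>{1..m}. \<Sum>z\<in>T. \<Sum>g\<in>stab G lact f.
         if c = (inv\<^bsub>G\<^esub> z \<otimes>\<^bsub>G\<^esub> g \<otimes>\<^bsub>G\<^esub> z, lact (inv\<^bsub>G\<^esub> z) f)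
         then inverse (\<tau> (inv\<^bsub>G\<^esub> z) g f)
              * \<tau> (inv\<^bsub>G\<^esub> z \<otimes>\<^bsub>G\<^esub> g \<otimes>\<^bsub>G\<^esub> z) (inv\<^bsub>G\<^esub> z) f * a i i g
         else 0))"
proof -
  interpret induced_comodule F G lact \<tau> f T m a
    using assms
    by (intro induced_comodule.intro matched_pair_twisted_action induced_comodule_axioms.intro)
      assumption+
  show ?thesis
    using induced_is_basis char_induced by blast
qed

end
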